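(* Let $\pi$ be a stand-alone statistically secure random oblivious transfer protocol between Alice and Bob based on an authenticated noiseless channel $\mathcal{F}_{\mathsf{AUTH}}$ and the functionality $\mathcal{F}_{P_{V,W|X,Y}}$, and let Bob be honest. Then, given Alice's inputs to and outputs from $\mathcal{F}_{P_{V,W|X,Y}}$ and all the noiseless communication exchanged by Alice and Bob through $\mathcal{F}_{\mathsf{AUTH}}$ during the execution of $\pi$, with overwhelming probability it is possible to extract the output that Bob would obtain both in the case that his choice bit is $c=0$ and in the case that $c=1$.
   Context: The functionality $\mathcal{F}_{P_{V,W|X,Y}}$ (for a conditional distribution $P_{V,W|X,Y}$ on finite alphabets): on inputs $x\in\mathcal{X}$ from Alice and $y\in\mathcal{Y}$ from Bob it samples $(v,w)\sim P_{V,W|X,Y}(\cdot,\cdot|x,y)$ and gives $v$ to Alice and $w$ to Bob. In $\pi$ with security parameter $n$, in round $i$ ($i=1,\dots,n$) the parties input $x_i,y_i$ to $\mathcal{F}_{P_{V,W|X,Y}}$ and receive $v_i,w_i$; they may exchange messages over $\mathcal{F}_{\mathsf{AUTH}}$ at any time. Parties' randomness are random variables $R_A,R_B$ over $\{0,1\}^*$, with protocol actions deterministic functions of the views. Honest Alice outputs $(b_0,b_1)$, honest Bob outputs $(c,d)$. $\delta(P_X,P_Y)=\max_{S}|\sum_{x\in S}P_X(x)-P_Y(x)|$; $I_S(X;Y|Z)=\delta(P_{XYZ},P_ZP_{X|Z}P_{Y|Z})$. Stand-alone statistical security means there is $\epsilon$ negligible in $n$ with: (Correctness) with both honest, $b_0,b_1,c$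 uniform and $\Pr[D=B_C]\ge1-\epsilon$; (Security for Alice) if Alice is honest, $b_0,b_1$ uniform and there exists a random variable $C$ with $I_S(B_0,B_1;C)\le\epsilon$ and $I_S(B_0,B_1;\mathsf{output}_{\mathsf{Bob}}|C,B_C)\le\epsilon$; (Security for Bob) if Bob is honest, $c$ uniform and $I_S(C;\mathsf{output}_{\mathsf{Alice}})\le\epsilon$, where $\mathsf{output}$ denotes the output of the possibly malicious party. Extraction procedures may be computationally unbounded. *)

theory Defs
  imports "HOL-Probability.Probability"
begin

definition stat_dist :: "'a pmf \<Rightarrow> 'a pmf \<Rightarrow> real" where
  "stat_dist p q = (SUP S. \<bar>measure_pmf.prob p S - measure_pmf.prob q S\<bar>)"

text \<open>For a joint distribution J of (X,Y,Z): the distribution P_Z P_{X|Z} P_{Y|Z}.\<close>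
definition cond_indep_version :: "('a \<times> 'b \<times> 'c) pmf \<Rightarrow> ('a \<times> 'b \<times> 'c) pmf" where
  "cond_indep_version J =
     bind_pmf (map_pmf (\<lambda>t. snd (snd t)) J) (\<lambda>z.
       bind_pmf (map_pmf fst (cond_pmf J {t. snd (snd t) = z})) (\<lambda>x.
         bind_pmf (map_pmf (\<lambda>t. fst (snd t)) (cond_pmf J {t. snd (snd t) = z})) (\<lambda>y.
           return_pmf (x, y, z))))"

definition IS_cond :: "('a \<times> 'b \<times> 'c) pmf \<Rightarrow> real" where
  "IS_cond J = stat_dist J (cond_indep_version J)"

definition IS :: "('a \<times> 'b) pmf \<Rightarrow> real" where
  "IS J = stat_dist J (pair_pmf (map_pmf fst J) (map_pmf snd J))"

definition negligible :: "(nat \<Rightarrow> real) \<Rightarrow> bool" where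
  "negligible f \<longleftrightarrow> (\<forall>c::nat. \<exists>N. \<forall>n\<ge>N. \<bar>f n\<bar> < 1 / real n ^ c)"

definition uniform_bit :: "bool pmf \<Rightarrow> bool" where
  "uniform_bit p \<longleftrightarrow> p = bernoulli_pmf (1/2)"

text \<open>Schedule steps: a message from Alice over F_AUTH, a message from Bob over F_AUTH,
  or one invocation of the functionality F_P.\<close>
datatype step = StepA | StepB | StepF

datatype ('x,'y,'v,'w) ev = FromA "bool list" | FromB "bool list" | Call 'x 'y 'v 'w

text \<open>Local view events of one party: messages it sent, messages it received,
  and its own input/output of a call to F_P.\<close>
datatype ('a,'b) lev = Sent "bool list" | Rcvd "bool list" | Fio 'a 'b

fun projA :: "('x,'y,'v,'w) ev \<Rightarrow> ('x,'v) lev" where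
  "projA (FromA m) = Sent m"
| "projA (FromB m) = Rcvd m"
| "projA (Call x y v w) = Fio x v"

fun projB :: "('x,'y,'v,'w) ev \<Rightarrow> ('y,'w) lev" where
  "projB (FromA m) = Rcvd m"
| "projB (FromB m) = Sent m"
| "projB (Call x y v w) = Fio y w"

text \<open>A (possibly malicious) party strategy: a distribution of its randomness over {0,1}^*,
  and deterministic functions of (security parameter, randomness, local history) giving
  the next message and the next input to F_P.\<close>
record ('a,'b) strat =
  rnd :: "nat \<Rightarrow> bool list pmf"
  msg :: "nat \<Rightarrow> bool list \<Rightarrow> ('a,'b) lev list \<Rightarrow> bool list"
  inp :: "nat \<Rightarrow> bool list \<Rightarrow> ('a,'b) lev list \<Rightarrow> 'a"

record ('x,'y,'v,'w) protocol =
  sched :: "nat \<Rightarrow> step list"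
  alice :: "('x,'v) strat"
  bob :: "('y,'w) strat"
  outA :: "nat \<Rightarrow> bool list \<Rightarrow> ('x,'v) lev list \<Rightarrow> bool \<times> bool"   \<comment> \<open>(b0,b1)\<close>
  outB :: "nat \<Rightarrow> bool list \<Rightarrow> ('y,'w) lev list \<Rightarrow> bool \<times> bool"   \<comment> \<open>(c,d)\<close>

fun run :: "('x \<Rightarrow> 'y \<Rightarrow> ('v \<times> 'w) pmf)
   \<Rightarrow> (('x,'v) lev list \<Rightarrow> bool list) \<Rightarrow> (('x,'v) lev list \<Rightarrow> 'x)
   \<Rightarrow> (('y,'w) lev list \<Rightarrow> bool list) \<Rightarrow> (('y,'w) lev list \<Rightarrow> 'y)
   \<Rightarrow> step list \<Rightarrow> ('x,'y,'v,'w) ev list \<Rightarrow> ('x,'y,'v,'w) ev list pmf" where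
  "run P am ai bm bi [] h = return_pmf h"
| "run P am ai bm bi (StepA # s) h = run P am ai bm bi s (h @ [FromA (am (map projA h))])"
| "run P am ai bm bi (StepB # s) h = run P am ai bm bi s (h @ [FromB (bm (map projB h))])"
| "run P am ai bm bi (StepF # s) h =
     bind_pmf (P (ai (map projA h)) (bi (map projB h)))
       (\<lambda>(v,w). run P am ai bm bi s (h @ [Call (ai (map projA h)) (bi (map projB h)) v w]))"

text \<open>Outcome of an execution: (R_A, R_B, full history).\<close>
type_synonym ('x,'y,'v,'w) outcome = "bool list \<times> bool list \<times> ('x,'y,'v,'w) ev list"

definition exec :: "('x \<Rightarrow> 'y \<Rightarrow> ('v \<times> 'w) pmf) \<Rightarrow> (nat \<Rightarrow> step list)
    \<Rightarrow> ('x,'v) strat \<Rightarrow> ('y,'w) strat \<Rightarrow> nat \<Rightarrow> ('x,'y,'v,'w) outcome pmf" where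
  "exec P sch A B n =
     bind_pmf (rnd A n) (\<lambda>ra. bind_pmf (rnd B n) (\<lambda>rb.
       map_pmf (\<lambda>h. (ra, rb, h))
         (run P (msg A n ra) (inp A n ra) (msg B n rb) (inp B n rb) (sch n) [])))"

definition viewA :: "('x,'y,'v,'w) outcome \<Rightarrow> bool list \<times> ('x,'v) lev list" where
  "viewA \<omega> = (fst \<omega>, map projA (snd (snd \<omega>)))"

definition viewB :: "('x,'y,'v,'w) outcome \<Rightarrow> bool list \<times> ('y,'w) lev list" where
  "viewB \<omega> = (fst (snd \<omega>), map projB (snd (snd \<omega>)))"

text \<open>Alice's inputs to / outputs from F_P together with the whole F_AUTH transcript
  (everything Alice sees except her own randomness).\<close>
definition alice_data :: "('x,'y,'v,'w) outcome \<Rightarrow> ('x,'v) lev list" where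
  "alice_data \<omega> = map projA (snd (snd \<omega>))"

definition honest_B0 :: "('x,'y,'v,'w) protocol \<Rightarrow> nat \<Rightarrow> ('x,'y,'v,'w) outcome \<Rightarrow> bool" where
  "honest_B0 \<pi> n \<omega> = fst (outA \<pi> n (fst (viewA \<omega>)) (snd (viewA \<omega>)))"
definition honest_B1 :: "('x,'y,'v,'w) protocol \<Rightarrow> nat \<Rightarrow> ('x,'y,'v,'w) outcome \<Rightarrow> bool" where
  "honest_B1 \<pi> n \<omega> = snd (outA \<pi> n (fst (viewA \<omega>)) (snd (viewA \<omega>)))"
definition honest_C :: "('x,'y,'v,'w) protocol \<Rightarrow> nat \<Rightarrow> ('x,'y,'v,'w) outcome \<Rightarrow> bool" where
  "honest_C \<pi> n \<omega> = fst (outB \<pi> n (fst (viewB \<omega>)) (snd (viewB \<omega>)))"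
definition honest_D :: "('x,'y,'v,'w) protocol \<Rightarrow> nat \<Rightarrow> ('x,'y,'v,'w) outcome \<Rightarrow> bool" where
  "honest_D \<pi> n \<omega> = snd (outB \<pi> n (fst (viewB \<omega>)) (snd (viewB \<omega>)))"

definition well_formed :: "('x,'y,'v,'w) protocol \<Rightarrow> bool" where
  "well_formed \<pi> \<longleftrightarrow> (\<forall>n. length (filter (\<lambda>s. s = StepF) (sched \<pi> n)) = n)"

text \<open>Stand-alone statistical security of random OT. A malicious party's output is taken
  to be its entire view (any other output is a function of it).\<close>
definition secure_ROT :: "('x \<Rightarrow> 'y \<Rightarrow> ('v \<times> 'w) pmf) \<Rightarrow> ('x,'y,'v,'w) protocol
    \<Rightarrow> (nat \<Rightarrow> real) \<Rightarrow> bool" where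
  "secure_ROT P \<pi> \<epsilon> \<longleftrightarrow>
    \<comment> \<open>Correctness\<close>
    (\<forall>n. let E = exec P (sched \<pi>) (alice \<pi>) (bob \<pi>) n in
        uniform_bit (map_pmf (honest_B0 \<pi> n) E) \<and> uniform_bit (map_pmf (honest_B1 \<pi> n) E)
      \<and> uniform_bit (map_pmf (honest_C \<pi> n) E)
      \<and> measure_pmf.prob E {\<omega>. honest_D \<pi> n \<omega> =
            (if honest_C \<pi> n \<omega> then honest_B1 \<pi> n \<omega> else honest_B0 \<pi> n \<omega>)} \<ge> 1 - \<epsilon> n)
  \<and> \<comment> \<open>Security for Alice\<close>
    (\<forall>B' n. let E = exec P (sched \<pi>) (alice \<pi>) B' n in
        uniform_bit (map_pmf (honest_B0 \<pi> n) E) \<and> uniform_bit (map_pmf (honest_B1 \<pi> n) E)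
      \<and> (\<exists>Q :: (('x,'y,'v,'w) outcome \<times> bool) pmf. map_pmf fst Q = E
          \<and> IS (map_pmf (\<lambda>(\<omega>,c). ((honest_B0 \<pi> n \<omega>, honest_B1 \<pi> n \<omega>), c)) Q) \<le> \<epsilon> n
          \<and> IS_cond (map_pmf (\<lambda>(\<omega>,c). ((honest_B0 \<pi> n \<omega>, honest_B1 \<pi> n \<omega>), viewB \<omega>,
                (c, if c then honest_B1 \<pi> n \<omega> else honest_B0 \<pi> n \<omega>))) Q) \<le> \<epsilon> n))
  \<and> \<comment> \<open>Security for Bob\<close>
    (\<forall>A' n. let E = exec P (sched \<pi>) A' (bob \<pi>) n in
        uniform_bit (map_pmf (honest_C \<pi> n) E)
      \<and> IS (map_pmf (\<lambda>\<omega>. (honest_C \<pi> n \<omega>, viewA \<omega>)) E) \<le> \<epsilon> n)"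

end

theory Submission
  imports Defs
begin

text \<open>Fix Bob's choice c and condition on everything Alice sees except her randomness, i.e. on
  her F_P inputs/outputs and the F_AUTH transcript d. The probability of an execution then
  factorises into a term depending only on Alice's randomness (is her strategy consistent with d?)
  and a term depending only on Bob's randomness and the functionality. So, given d, Alice's output
  bit B_c is independent of Bob's output D, and the maximum-a-posteriori guess of D from d alone is
  correct at least as often as B_c. Correctness gives Pr[C = c, D = B_c] \<ge> 1/2 - \<epsilon>, and since
  Pr[C = c] = 1/2 the guess succeeds with conditional probability at least 1 - 2\<epsilon>.\<close>

fun alice_consistent :: "(('x,'v) lev list \<Rightarrow> bool list) \<Rightarrow> (('x,'v) lev list \<Rightarrow> 'x) \<Rightarrow> step list
   \<Rightarrow> ('x,'v) lev list \<Rightarrow> ('x,'v) lev list \<Rightarrow> bool" where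
  "alice_consistent am ai [] la r \<longleftrightarrow> r = []"
| "alice_consistent am ai (StepA # s) la (Sent m # r) \<longleftrightarrow>
     m = am la \<and> alice_consistent am ai s (la @ [Sent m]) r"
| "alice_consistent am ai (StepB # s) la (Rcvd m # r) \<longleftrightarrow>
     alice_consistent am ai s (la @ [Rcvd m]) r"
| "alice_consistent am ai (StepF # s) la (Fio x v # r) \<longleftrightarrow>
     x = ai la \<and> alice_consistent am ai s (la @ [Fio x v]) r"
| "alice_consistent am ai (_ # s) la r \<longleftrightarrow> False"

fun bob_weight :: "('x \<Rightarrow> 'y \<Rightarrow> ('v \<times> 'w) pmf) \<Rightarrow> (('y,'w) lev list \<Rightarrow> bool list)
   \<Rightarrow> (('y,'w) lev list \<Rightarrow> 'y) \<Rightarrow> step list \<Rightarrow> ('x,'y,'v,'w) ev list \<Rightarrow> ('x,'y,'v,'w) ev list \<Rightarrow> real" where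
  "bob_weight P bm bi [] h r = (if r = [] then 1 else 0)"
| "bob_weight P bm bi (StepA # s) h (FromA m # r) = bob_weight P bm bi s (h @ [FromA m]) r"
| "bob_weight P bm bi (StepB # s) h (FromB m # r) =
     (if m = bm (map projB h) then bob_weight P bm bi s (h @ [FromB m]) r else 0)"
| "bob_weight P bm bi (StepF # s) h (Call x y v w # r) =
     (if y = bi (map projB h) then pmf (P x y) (v, w) * bob_weight P bm bi s (h @ [Call x y v w]) r else 0)"
| "bob_weight P bm bi (_ # s) h r = 0"

lemma run_extends: "h' \<in> set_pmf (run P am ai bm bi s h) \<Longrightarrow> \<exists>r. h' = h @ r"
proof (induction s arbitrary: h)
  case (Cons st s)
  then show ?case
    by (cases st) (fastforce split: prod.splits)+
qed simp

lemma pmf_run_append_other: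
  assumes "r = [] \<or> hd r \<noteq> e"
  shows "pmf (run P am ai bm bi s (h @ [e])) (h @ r) = 0"
proof -
  have "h @ r \<notin> set_pmf (run P am ai bm bi s (h @ [e]))"
    using run_extends[of "h @ r" P am ai bm bi s "h @ [e]"] assms by (cases r) auto
  then show ?thesis
    by (simp add: set_pmf_eq)
qed

lemma expectation_pmf_eq_single:
  assumes "\<And>y. y \<noteq> a \<Longrightarrow> f y = 0"
  shows "measure_pmf.expectation p f = f a * pmf p a"
  using integral_measure_pmf_real[of "{a}" p f] assms by auto

lemma pmf_run_StepF:
  "pmf (run P am ai bm bi (StepF # s) h) (h @ r) =
     (case r of Call x y v w # r' \<Rightarrow>
        if x = ai (map projA h) \<and> y = bi (map projB h)
        then pmf (P x y) (v, w) * pmf (run P am ai bm bi s (h @ [Call x y v w])) (h @ r)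
        else 0
      | _ \<Rightarrow> 0)"
proof -
  let ?x = "ai (map projA h)" and ?y = "bi (map projB h)"
  let ?f = "\<lambda>(v, w). pmf (run P am ai bm bi s (h @ [Call ?x ?y v w])) (h @ r)"
  have "pmf (run P am ai bm bi (StepF # s) h) (h @ r) = measure_pmf.expectation (P ?x ?y) ?f"
    by (simp add: pmf_bind split_def)
  also have "\<dots> = (case r of Call x y v w # r' \<Rightarrow>
        if x = ?x \<and> y = ?y then pmf (P x y) (v, w) * pmf (run P am ai bm bi s (h @ [Call x y v w])) (h @ r)
        else 0 | _ \<Rightarrow> 0)"
  proof (cases "\<exists>v w r'. r = Call ?x ?y v w # r'")
    case True
    then obtain v w r' where r: "r = Call ?x ?y v w # r'" by blast
    have "measure_pmf.expectation (P ?x ?y) ?f = ?f (v, w) * pmf (P ?x ?y) (v, w)"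
      by (rule expectation_pmf_eq_single) (auto simp: r intro!: pmf_run_append_other)
    then show ?thesis by (simp add: r)
  next
    case False
    have "?f = (\<lambda>_. 0)"
      using False pmf_run_append_other[of "[]", simplified]
      by (intro ext, cases r) (auto intro!: pmf_run_append_other)
    then show ?thesis
      using False by (auto split: list.split ev.split)
  qed
  finally show ?thesis .
qed

lemma pmf_run_factorizes:
  "pmf (run P am ai bm bi s h) (h @ r) =
     (if alice_consistent am ai s (map projA h) (map projA r) then bob_weight P bm bi s h r else 0)"
proof (induction s arbitrary: h r)
  case Nil
  then show ?case by (simp add: pmf_return)
next
  case (Cons st s)
  show ?case
  proof (cases r)
    case Nil
    then show ?thesis
      using pmf_run_append_other[of "[]", simplified] pmf_run_StepF[where h = h and r = "[]"]
      by (cases st) auto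
  next
    case (Cons e r')
    note IH = Cons.IH[of "h @ [e]" r'] and other = pmf_run_append_other[of "e # r'"]
    show ?thesis
    proof (cases st)
      case StepA
      then show ?thesis
        using IH other Cons by (cases "e = FromA (am (map projA h))"; cases e) auto
    next
      case StepB
      then show ?thesis
        using IH other Cons by (cases "e = FromB (bm (map projB h))"; cases e) auto
    next
      case StepF
      then show ?thesis
        using IH Cons by (cases e) (auto simp del: run.simps(4) simp: pmf_run_StepF)
    qed
  qed
qed

definition seeded_run :: "'ra pmf \<Rightarrow> 'rb pmf \<Rightarrow> ('ra \<Rightarrow> 'rb \<Rightarrow> 'h pmf) \<Rightarrow> ('ra \<times> 'rb \<times> 'h) pmf" where
  "seeded_run pA pB R = bind_pmf pA (\<lambda>ra. bind_pmf pB (\<lambda>rb. map_pmf (\<lambda>h. (ra, rb, h)) (R ra rb)))"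

lemma emeasure_seeded_run_rectangle:
  assumes factor: "\<And>ra rb h. pmf (R ra rb) h = (if a ra (f h) then b rb h else 0)"
  shows "emeasure (seeded_run pA pB R) {(ra, rb, h). f h = d \<and> X ra \<and> Y rb h}
    = emeasure pA {ra. a ra d \<and> X ra} *
      (\<integral>\<^sup>+rb. (\<integral>\<^sup>+h. ennreal (b rb h) * indicator {h. f h = d \<and> Y rb h} h \<partial>count_space UNIV) \<partial>pB)"
proof -
  define G where "G rb = (\<integral>\<^sup>+h. ennreal (b rb h) * indicator {h. f h = d \<and> Y rb h} h \<partial>count_space UNIV)" for rb
  let ?A = "{ra. a ra d \<and> X ra}"
  have inner: "emeasure (map_pmf (\<lambda>h. (ra, rb, h)) (R ra rb)) {(ra, rb, h). f h = d \<and> X ra \<and> Y rb h}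
      = indicator ?A ra * G rb" for ra rb
  proof -
    have "emeasure (map_pmf (\<lambda>h. (ra, rb, h)) (R ra rb)) {(ra, rb, h). f h = d \<and> X ra \<and> Y rb h}
        = (\<integral>\<^sup>+h. indicator {h. f h = d \<and> X ra \<and> Y rb h} h \<partial>R ra rb)"
      by (simp add: emeasure_map_pmf vimage_def)
    also have "\<dots> = (\<integral>\<^sup>+h. indicator ?A ra * (ennreal (b rb h) * indicator {h. f h = d \<and> Y rb h} h)
        \<partial>count_space UNIV)"
      by (simp only: nn_integral_measure_pmf) (rule nn_integral_cong; auto simp: factor indicator_def)
    also have "\<dots> = indicator ?A ra * G rb"
      unfolding G_def by (rule nn_integral_cmult) simp
    finally show ?thesis .
  qed
  have "emeasure (seeded_run pA pB R) {(ra, rb, h). f h = d \<and> X ra \<and> Y rb h}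
      = (\<integral>\<^sup>+ra. (\<integral>\<^sup>+rb. indicator ?A ra * G rb \<partial>pB) \<partial>pA)"
    by (simp only: seeded_run_def emeasure_bind_pmf inner)
  also have "\<dots> = (\<integral>\<^sup>+ra. indicator ?A ra \<partial>pA) * (\<integral>\<^sup>+rb. G rb \<partial>pB)"
    by (simp add: nn_integral_cmult nn_integral_multc)
  finally show ?thesis
    unfolding G_def by simp
qed

lemma mixture_le_max:
  fixes p q x y :: ennreal
  shows "p * x + q * y \<le> max ((p + q) * x) ((p + q) * y)"
proof (cases "x \<le> y")
  case True
  then have "p * x + q * y \<le> (p + q) * y"
    by (simp add: distrib_right mult_left_mono)
  then show ?thesis by (rule order_trans) simp
next
  case False
  then have "p * x + q * y \<le> (p + q) * x"
    by (simp add: distrib_right mult_left_mono)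
  then show ?thesis by (rule order_trans) simp
qed

lemma emeasure_seeded_run_guess_le_max:
  assumes factor: "\<And>ra rb h. pmf (R ra rb) h = (if a ra (f h) then b rb h else 0)"
  shows "emeasure (seeded_run pA pB R) {(ra, rb, h). f h = d \<and> Y rb h (guess ra)}
    \<le> max (emeasure (seeded_run pA pB R) {(ra, rb, h). f h = d \<and> Y rb h True})
          (emeasure (seeded_run pA pB R) {(ra, rb, h). f h = d \<and> Y rb h False})"
proof -
  let ?E = "seeded_run pA pB R"
  define G where "G bit = (\<integral>\<^sup>+rb. (\<integral>\<^sup>+h. ennreal (b rb h) * indicator {h. f h = d \<and> Y rb h bit} h
    \<partial>count_space UNIV) \<partial>pB)" for bit
  define pT where "pT = emeasure pA {ra. a ra d \<and> guess ra}"
  define pF where "pF = emeasure pA {ra. a ra d \<and> \<not> guess ra}"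
  have rectangle: "emeasure ?E {(ra, rb, h). f h = d \<and> X ra \<and> Y rb h bit} = emeasure pA {ra. a ra d \<and> X ra} * G bit"
    for X bit
    unfolding G_def by (rule emeasure_seeded_run_rectangle[where a = a and b = b and f = f, OF factor])
  have "emeasure pA {ra. a ra d \<and> True} = pT + pF"
    unfolding pT_def pF_def by (subst plus_emeasure) (auto intro!: arg_cong[where f = "emeasure _"])
  then have bit: "emeasure ?E {(ra, rb, h). f h = d \<and> Y rb h bit} = (pT + pF) * G bit" for bit
    using rectangle[of "\<lambda>_. True" bit] by simp
  have "{(ra, rb, h). f h = d \<and> Y rb h (guess ra)}
     = {(ra, rb, h). f h = d \<and> guess ra \<and> Y rb h True} \<union> {(ra, rb, h). f h = d \<and> \<not> guess ra \<and> Y rb h False}"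
    by (auto; metis (full_types))
  then have "emeasure ?E {(ra, rb, h). f h = d \<and> Y rb h (guess ra)} = pT * G True + pF * G False"
    unfolding pT_def pF_def rectangle[symmetric] by (subst plus_emeasure) auto
  also have "\<dots> \<le> max ((pT + pF) * G True) ((pT + pF) * G False)"
    by (rule mixture_le_max)
  finally show ?thesis
    by (simp only: bit)
qed

definition most_likely :: "'o pmf \<Rightarrow> ('o \<Rightarrow> bool \<Rightarrow> bool) \<Rightarrow> bool" where
  "most_likely E Q \<longleftrightarrow> emeasure E {\<omega>. Q \<omega> False} \<le> emeasure E {\<omega>. Q \<omega> True}"

lemma emeasure_most_likely:
  fixes E :: "'o pmf"
  shows "emeasure E {\<omega>. Q \<omega> (most_likely E Q)} = max (emeasure E {\<omega>. Q \<omega> True}) (emeasure E {\<omega>. Q \<omega> False})"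
proof (cases "most_likely E Q")
  case True
  then show ?thesis by (simp add: most_likely_def max_def)
next
  case False
  then show ?thesis by (simp add: most_likely_def max_def) (meson nle_le)
qed

lemma emeasure_le_if_fibres_le:
  fixes E :: "'o pmf" and f :: "'o \<Rightarrow> 'd"
  assumes "\<And>d. emeasure E (S1 \<inter> f -` {d}) \<le> emeasure E (S2 \<inter> f -` {d})"
  shows "emeasure E S1 \<le> emeasure E S2"
proof -
  let ?I = "f ` set_pmf E"
  have fibres: "emeasure E S = (\<integral>\<^sup>+d. emeasure E (S \<inter> f -` {d}) \<partial>count_space ?I)" for S
  proof -
    have "emeasure E S = emeasure E (\<Union>d\<in>?I. S \<inter> set_pmf E \<inter> f -` {d})"
      by (subst emeasure_Int_set_pmf[symmetric]) (auto intro!: arg_cong[where f = "emeasure E"])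
    also have "\<dots> = (\<integral>\<^sup>+d. emeasure E (S \<inter> set_pmf E \<inter> f -` {d}) \<partial>count_space ?I)"
      by (rule emeasure_UN_countable) (auto simp: disjoint_family_on_def)
    also have "\<dots> = (\<integral>\<^sup>+d. emeasure E (S \<inter> f -` {d}) \<partial>count_space ?I)"
      by (metis Int_assoc Int_commute emeasure_Int_set_pmf)
    finally show ?thesis .
  qed
  show ?thesis
    unfolding fibres[of S1] fibres[of S2] by (rule nn_integral_mono) (rule assms)
qed

lemma negligible_cmult:
  assumes "negligible \<epsilon>"
  shows "negligible (\<lambda>n. k * \<epsilon> n)"
  unfolding negligible_def
proof
  fix c :: nat
  obtain N where N: "\<And>n. n \<ge> N \<Longrightarrow> \<bar>\<epsilon> n\<bar> < 1 / real n ^ Suc c"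
    using assms unfolding negligible_def by blast
  show "\<exists>N. \<forall>n\<ge>N. \<bar>k * \<epsilon> n\<bar> < 1 / real n ^ c"
  proof (intro exI allI impI)
    fix n assume "max N (nat \<lceil>\<bar>k\<bar>\<rceil> + 1) \<le> n"
    then have n: "n \<ge> N" "\<bar>k\<bar> < real n" by linarith+
    then have "\<bar>k * \<epsilon> n\<bar> \<le> real n * \<bar>\<epsilon> n\<bar>"
      by (simp add: abs_mult mult_right_mono)
    also have "\<dots> < real n * (1 / real n ^ Suc c)"
      using N[OF n(1)] n(2) by (intro mult_strict_left_mono) auto
    also have "\<dots> = 1 / real n ^ c"
      using n(2) by simp
    finally show "\<bar>k * \<epsilon> n\<bar> < 1 / real n ^ c" .
  qed
qed

lemma measure_pmf_prob_Int_ge: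
  fixes p :: "'a pmf"
  shows "measure_pmf.prob p A + measure_pmf.prob p B - 1 \<le> measure_pmf.prob p (A \<inter> B)"
  using measure_Un3[of A p B] measure_pmf.prob_le_1[of p "A \<union> B"]
  by (simp add: measure_pmf.fmeasurable_eq_sets)

lemma exec_eq_seeded_run:
  "exec P sch A B n = seeded_run (rnd A n) (rnd B n)
     (\<lambda>ra rb. run P (msg A n ra) (inp A n ra) (msg B n rb) (inp B n rb) (sch n) [])"
  by (simp add: exec_def seeded_run_def)

definition extractor :: "('x \<Rightarrow> 'y \<Rightarrow> ('v \<times> 'w) pmf) \<Rightarrow> ('x,'y,'v,'w) protocol
    \<Rightarrow> nat \<Rightarrow> ('x,'v) lev list \<Rightarrow> bool \<Rightarrow> bool" where
  "extractor P \<pi> n d c = most_likely (exec P (sched \<pi>) (alice \<pi>) (bob \<pi>) n)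
     (\<lambda>\<omega> bit. alice_data \<omega> = d \<and> honest_C \<pi> n \<omega> = c \<and> honest_D \<pi> n \<omega> = bit)"

lemma honest_output_le_extractor:
  fixes P :: "'x \<Rightarrow> 'y \<Rightarrow> ('v \<times> 'w) pmf" and \<pi> :: "('x,'y,'v,'w) protocol" and n :: nat
  defines "E \<equiv> exec P (sched \<pi>) (alice \<pi>) (bob \<pi>) n"
  shows "emeasure E {\<omega>. honest_C \<pi> n \<omega> = c \<and>
           honest_D \<pi> n \<omega> = (if honest_C \<pi> n \<omega> then honest_B1 \<pi> n \<omega> else honest_B0 \<pi> n \<omega>)}
    \<le> emeasure E {\<omega>. honest_C \<pi> n \<omega> = c \<and> honest_D \<pi> n \<omega> = extractor P \<pi> n (alice_data \<omega>) c}"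
    (is "emeasure E ?honest \<le> emeasure E ?extracted")
proof (rule emeasure_le_if_fibres_le[where f = alice_data])
  fix d
  let ?A = "alice \<pi>" and ?B = "bob \<pi>"
  define Y where "Y rb h bit \<longleftrightarrow> outB \<pi> n rb (map projB h) = (c, bit)"
    for rb and h :: "('x,'y,'v,'w) ev list" and bit
  define guess where "guess ra = (if c then snd else fst) (outA \<pi> n ra d)" for ra
  let ?Q = "\<lambda>\<omega> bit. alice_data \<omega> = d \<and> honest_C \<pi> n \<omega> = c \<and> honest_D \<pi> n \<omega> = bit"
  define consistent where "consistent ra = alice_consistent (msg ?A n ra) (inp ?A n ra) (sched \<pi> n) []"
    for ra
  define weight where "weight rb = bob_weight P (msg ?B n rb) (inp ?B n rb) (sched \<pi> n) []" for rb
  have factor: "pmf (run P (msg ?A n ra) (inp ?A n ra) (msg ?B n rb) (inp ?B n rb) (sched \<pi> n) []) h =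
      (if consistent ra (map projA h) then weight rb h else 0)" for ra rb h
    using pmf_run_factorizes[where h = "[]" and r = h] by (simp add: consistent_def weight_def)
  have fibre_bit: "{\<omega>. ?Q \<omega> bit} = {(ra, rb, h). map projA h = d \<and> Y rb h bit}" for bit
    unfolding Y_def honest_C_def honest_D_def viewB_def alice_data_def by (auto simp: prod_eq_iff)
  have "?honest \<inter> alice_data -` {d} = {(ra, rb, h). map projA h = d \<and> Y rb h (guess ra)}"
    unfolding Y_def guess_def honest_C_def honest_D_def honest_B0_def honest_B1_def viewA_def viewB_def
      alice_data_def
    by (auto simp: prod_eq_iff)
  then have "emeasure E (?honest \<inter> alice_data -` {d})
      \<le> max (emeasure E {\<omega>. ?Q \<omega> True}) (emeasure E {\<omega>. ?Q \<omega> False})"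
    unfolding fibre_bit E_def exec_eq_seeded_run
    by (simp only:)
      (rule emeasure_seeded_run_guess_le_max[where a = consistent and b = weight and f = "map projA",
        OF factor])
  also have "\<dots> = emeasure E {\<omega>. ?Q \<omega> (most_likely E ?Q)}"
    by (rule emeasure_most_likely[symmetric])
  also have "{\<omega>. ?Q \<omega> (most_likely E ?Q)} = ?extracted \<inter> alice_data -` {d}"
    unfolding extractor_def E_def by auto
  finally show "emeasure E (?honest \<inter> alice_data -` {d}) \<le> emeasure E (?extracted \<inter> alice_data -` {d})" .
qed

lemma extractor_succeeds:
  fixes P :: "'x \<Rightarrow> 'y \<Rightarrow> ('v \<times> 'w) pmf" and \<pi> :: "('x,'y,'v,'w) protocol" and n :: nat
  assumes "secure_ROT P \<pi> \<epsilon>"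
  defines "E \<equiv> exec P (sched \<pi>) (alice \<pi>) (bob \<pi>) n"
  shows "measure_pmf.prob E {\<omega>. honest_C \<pi> n \<omega> = c \<and> honest_D \<pi> n \<omega> = extractor P \<pi> n (alice_data \<omega>) c}
    \<ge> (1 - 2 * \<epsilon> n) * measure_pmf.prob E {\<omega>. honest_C \<pi> n \<omega> = c}"
proof -
  let ?C = "honest_C \<pi> n" and ?D = "honest_D \<pi> n" and ?B0 = "honest_B0 \<pi> n" and ?B1 = "honest_B1 \<pi> n"
  let ?correct = "{\<omega>. ?D \<omega> = (if ?C \<omega> then ?B1 \<omega> else ?B0 \<omega>)}"
  have uniform: "uniform_bit (map_pmf ?C E)" and correct: "measure_pmf.prob E ?correct \<ge> 1 - \<epsilon> n"
    using assms(1) unfolding secure_ROT_def Let_def E_def by blast+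
  have "measure_pmf.prob E {\<omega>. ?C \<omega> = c} = measure_pmf.prob (map_pmf ?C E) {c}"
    by (simp add: vimage_def)
  also have "\<dots> = 1 / 2"
    using uniform unfolding uniform_bit_def by (simp add: measure_pmf_single)
  finally have half: "measure_pmf.prob E {\<omega>. ?C \<omega> = c} = 1 / 2" .
  have "1 / 2 - \<epsilon> n \<le> measure_pmf.prob E ({\<omega>. ?C \<omega> = c} \<inter> ?correct)"
    using measure_pmf_prob_Int_ge[of E "{\<omega>. ?C \<omega> = c}" ?correct] half correct by linarith
  also have "\<dots> \<le> measure_pmf.prob E {\<omega>. ?C \<omega> = c \<and> ?D \<omega> = extractor P \<pi> n (alice_data \<omega>) c}"
    using honest_output_le_extractor[of P \<pi> n c] unfolding E_def[symmetric]
    by (simp add: measure_pmf.emeasure_eq_measure Collect_conj_eq[symmetric] conj_commute)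
  finally show ?thesis
    using half by (simp add: field_simps)
qed

theorem lemma1:
  fixes P :: "'x::finite \<Rightarrow> 'y::finite \<Rightarrow> ('v::finite \<times> 'w::finite) pmf"
    and \<pi> :: "('x,'y,'v,'w) protocol"
    and \<epsilon> :: "nat \<Rightarrow> real"
  assumes "well_formed \<pi>"
    and "negligible \<epsilon>"
    and "secure_ROT P \<pi> \<epsilon>"
  shows "\<exists>\<epsilon>' (g :: nat \<Rightarrow> ('x,'v) lev list \<Rightarrow> bool \<Rightarrow> bool). negligible \<epsilon>' \<and>
    (\<forall>n c. let E = exec P (sched \<pi>) (alice \<pi>) (bob \<pi>) n in
       measure_pmf.prob E {\<omega>. honest_C \<pi> n \<omega> = c \<and> honest_D \<pi> n \<omega> = g n (alice_data \<omega>) c}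
         \<ge> (1 - \<epsilon>' n) * measure_pmf.prob E {\<omega>. honest_C \<pi> n \<omega> = c})"
proof (intro exI conjI)
  show "negligible (\<lambda>n. 2 * \<epsilon> n)"
    using assms(2) by (rule negligible_cmult)
  show "\<forall>n c. let E = exec P (sched \<pi>) (alice \<pi>) (bob \<pi>) n in
      measure_pmf.prob E {\<omega>. honest_C \<pi> n \<omega> = c \<and> honest_D \<pi> n \<omega> = extractor P \<pi> n (alice_data \<omega>) c}
        \<ge> (1 - 2 * \<epsilon> n) * measure_pmf.prob E {\<omega>. honest_C \<pi> n \<omega> = c}"
    using extractor_succeeds[OF assms(3)] by (simp add: Let_def)
qed

end
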